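(* (a) Let $(A,\circ)$ be an anti-pre-Lie algebra with sub-adjacent Lie algebra $(A,[-,-])$. Define a bilinear form $\mathcal B$ on $A\oplus A^*$ by $\mathcal B(x+a^*,y+b^* )=\langle x,b^*\rangle+\langle a^*,y\rangle$ for $x,y\in A$, $a^*,b^*\in A^*$. Then $\mathcal B$ is a nondegenerate commutative 2-cocycle on the semi-direct product Lie algebra $A\ltimes_{-\mathcal L^*_\circ}A^*$. (b) Conversely, let $(\mathfrak g,[-,-])$ be a Lie algebra and $(\rho,\mathfrak g^* )$ a representation of it on $\mathfrak g^*$. Suppose that the bilinear form $\mathcal B(x+a^*,y+b^* )=\langle x,b^*\rangle+\langle a^*,y\rangle$ on $\mathfrak g\oplus\mathfrak g^*$ is a commutative 2-cocycle on $\mathfrak g\ltimes_\rho\mathfrak g^*$. Then there is a compatible anti-pre-Lie algebra structure $(\mathfrak g,\circ)$ on $(\mathfrak g,[-,-])$ (i.e. $(\mathfrak g,\circ)$ is anti-pre-Lie and $x\circ y-y\circ x=[x,y]$) such that $\rho=-\mathcal L^*_\circ$.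
   Context: All vector spaces are finite-dimensional over a field $\mathbb F$ of characteristic $0$. An anti-pre-Lie algebra is a vector space $A$ with a bilinear operation $\circ$ such that, writing $[x,y]=x\circ y-y\circ x$, for all $x,y,z\in A$: (i) $x\circ(y\circ z)-y\circ(x\circ z)=[y,x]\circ z$, and (ii) $[x,y]\circ z+[y,z]\circ x+[z,x]\circ y=0$; $(A,[-,-])$ is then a Lie algebra (the sub-adjacent Lie algebra). $-\mathcal L^*_\circ$ denotes the dual of the representation $-\mathcal L_\circ$ ($\mathcal L_\circ(x)y=x\circ y$), i.e. $\langle -\mathcal L^*_\circ(x)a^*,y\rangle=\langle a^*,x\circ y\rangle$. For a representation $(\rho,V)$ of a Lie algebra $\mathfrak g$, the semi-direct product $\mathfrak g\ltimes_\rho V$ is $\mathfrak g\oplus V$ with bracket $[x+u,y+v]=[x,y]+\rho(x)v-\rho(y)u$. A commutative 2-cocycle on a Lie algebra is a symmetric bilinear form $\mathcal B$ with $\mathcal B([x,y],z)+\mathcal B([y,z],x)+\mathcal B([z,x],y)=0$. *)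

theory Defs
  imports Main
begin

text \<open>Coordinate model: a finite-dimensional vector space over the field 'a
  is 'n \<Rightarrow> 'a for a finite index type 'n; its dual is again 'n \<Rightarrow> 'a,
  with the canonical pairing below.\<close>

definition vadd :: "('n \<Rightarrow> 'a::field) \<Rightarrow> ('n \<Rightarrow> 'a) \<Rightarrow> ('n \<Rightarrow> 'a)" where
  "vadd x y = (\<lambda>i. x i + y i)"

definition vsub :: "('n \<Rightarrow> 'a::field) \<Rightarrow> ('n \<Rightarrow> 'a) \<Rightarrow> ('n \<Rightarrow> 'a)" where
  "vsub x y = (\<lambda>i. x i - y i)"

definition vscale :: "'a::field \<Rightarrow> ('n \<Rightarrow> 'a) \<Rightarrow> ('n \<Rightarrow> 'a)" where
  "vscale c x = (\<lambda>i. c * x i)"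

definition vzero :: "'n \<Rightarrow> 'a::field" where
  "vzero = (\<lambda>i. 0)"

definition pair :: "('n::finite \<Rightarrow> 'a::field) \<Rightarrow> ('n \<Rightarrow> 'a) \<Rightarrow> 'a" where
  "pair x a = (\<Sum>i\<in>UNIV. x i * a i)"

definition linear_map :: "(('n \<Rightarrow> 'a::field) \<Rightarrow> ('m \<Rightarrow> 'a)) \<Rightarrow> bool" where
  "linear_map f \<longleftrightarrow> (\<forall>x y. f (vadd x y) = vadd (f x) (f y)) \<and> (\<forall>c x. f (vscale c x) = vscale c (f x))"

definition bilinear_op :: "(('n \<Rightarrow> 'a::field) \<Rightarrow> ('n \<Rightarrow> 'a) \<Rightarrow> ('n \<Rightarrow> 'a)) \<Rightarrow> bool" where
  "bilinear_op m \<longleftrightarrow> (\<forall>x. linear_map (m x)) \<and> (\<forall>y. linear_map (\<lambda>x. m x y))"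

definition commutator :: "(('n \<Rightarrow> 'a::field) \<Rightarrow> ('n \<Rightarrow> 'a) \<Rightarrow> ('n \<Rightarrow> 'a)) \<Rightarrow> ('n \<Rightarrow> 'a) \<Rightarrow> ('n \<Rightarrow> 'a) \<Rightarrow> ('n \<Rightarrow> 'a)" where
  "commutator m x y = vsub (m x y) (m y x)"

definition anti_pre_Lie :: "(('n \<Rightarrow> 'a::field) \<Rightarrow> ('n \<Rightarrow> 'a) \<Rightarrow> ('n \<Rightarrow> 'a)) \<Rightarrow> bool" where
  "anti_pre_Lie m \<longleftrightarrow> bilinear_op m \<and>
     (\<forall>x y z. vsub (m x (m y z)) (m y (m x z)) = m (commutator m y x) z) \<and>
     (\<forall>x y z. vadd (vadd (m (commutator m x y) z) (m (commutator m y z) x)) (m (commutator m z x) y) = vzero)"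

definition lie_algebra :: "(('n \<Rightarrow> 'a::field) \<Rightarrow> ('n \<Rightarrow> 'a) \<Rightarrow> ('n \<Rightarrow> 'a)) \<Rightarrow> bool" where
  "lie_algebra br \<longleftrightarrow> bilinear_op br \<and> (\<forall>x. br x x = vzero) \<and>
     (\<forall>x y z. vadd (vadd (br x (br y z)) (br y (br z x))) (br z (br x y)) = vzero)"

definition representation :: "(('n \<Rightarrow> 'a::field) \<Rightarrow> ('n \<Rightarrow> 'a) \<Rightarrow> ('n \<Rightarrow> 'a))
     \<Rightarrow> (('n \<Rightarrow> 'a) \<Rightarrow> ('m \<Rightarrow> 'a) \<Rightarrow> ('m \<Rightarrow> 'a)) \<Rightarrow> bool" where
  "representation br \<rho> \<longleftrightarrow> (\<forall>v. linear_map (\<lambda>x. \<rho> x v)) \<and> (\<forall>x. linear_map (\<rho> x)) \<and>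
     (\<forall>x y v. \<rho> (br x y) v = vsub (\<rho> x (\<rho> y v)) (\<rho> y (\<rho> x v)))"

text \<open>- L^*: the dual of -L, i.e. \<langle>-L^*(x) a*, y\<rangle> = \<langle>a*, x \<circ> y\<rangle>;
  written out in coordinates via the standard basis.\<close>
definition neg_dual_L :: "(('n::finite \<Rightarrow> 'a::field) \<Rightarrow> ('n \<Rightarrow> 'a) \<Rightarrow> ('n \<Rightarrow> 'a))
     \<Rightarrow> ('n \<Rightarrow> 'a) \<Rightarrow> ('n \<Rightarrow> 'a) \<Rightarrow> ('n \<Rightarrow> 'a)" where
  "neg_dual_L m x a = (\<lambda>j. pair (m x (\<lambda>k. if k = j then 1 else 0)) a)"

definition sd_bracket :: "(('n \<Rightarrow> 'a::field) \<Rightarrow> ('n \<Rightarrow> 'a) \<Rightarrow> ('n \<Rightarrow> 'a))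
     \<Rightarrow> (('n \<Rightarrow> 'a) \<Rightarrow> ('m \<Rightarrow> 'a) \<Rightarrow> ('m \<Rightarrow> 'a))
     \<Rightarrow> ('n \<Rightarrow> 'a) \<times> ('m \<Rightarrow> 'a) \<Rightarrow> ('n \<Rightarrow> 'a) \<times> ('m \<Rightarrow> 'a) \<Rightarrow> ('n \<Rightarrow> 'a) \<times> ('m \<Rightarrow> 'a)" where
  "sd_bracket br \<rho> u v = (br (fst u) (fst v), vsub (\<rho> (fst u) (snd v)) (\<rho> (fst v) (snd u)))"

definition padd :: "('n \<Rightarrow> 'a::field) \<times> ('m \<Rightarrow> 'a) \<Rightarrow> ('n \<Rightarrow> 'a) \<times> ('m \<Rightarrow> 'a) \<Rightarrow> ('n \<Rightarrow> 'a) \<times> ('m \<Rightarrow> 'a)" where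
  "padd u v = (vadd (fst u) (fst v), vadd (snd u) (snd v))"

definition pscale :: "'a::field \<Rightarrow> ('n \<Rightarrow> 'a) \<times> ('m \<Rightarrow> 'a) \<Rightarrow> ('n \<Rightarrow> 'a) \<times> ('m \<Rightarrow> 'a)" where
  "pscale c u = (vscale c (fst u), vscale c (snd u))"

definition comm_2cocycle :: "(('n \<Rightarrow> 'a::field) \<times> ('m \<Rightarrow> 'a) \<Rightarrow> ('n \<Rightarrow> 'a) \<times> ('m \<Rightarrow> 'a) \<Rightarrow> ('n \<Rightarrow> 'a) \<times> ('m \<Rightarrow> 'a))
     \<Rightarrow> (('n \<Rightarrow> 'a) \<times> ('m \<Rightarrow> 'a) \<Rightarrow> ('n \<Rightarrow> 'a) \<times> ('m \<Rightarrow> 'a) \<Rightarrow> 'a) \<Rightarrow> bool" where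
  "comm_2cocycle br B \<longleftrightarrow>
     (\<forall>u v w. B (padd u v) w = B u w + B v w) \<and> (\<forall>c u w. B (pscale c u) w = c * B u w) \<and>
     (\<forall>u v. B u v = B v u) \<and>
     (\<forall>x y z. B (br x y) z + B (br y z) x + B (br z x) y = 0)"

definition nondegenerate :: "(('n \<Rightarrow> 'a::field) \<times> ('m \<Rightarrow> 'a) \<Rightarrow> ('n \<Rightarrow> 'a) \<times> ('m \<Rightarrow> 'a) \<Rightarrow> 'a) \<Rightarrow> bool" where
  "nondegenerate B \<longleftrightarrow> (\<forall>u. (\<forall>v. B u v = 0) \<longrightarrow> u = (vzero, vzero))"

definition natB :: "('n::finite \<Rightarrow> 'a::field) \<times> ('n \<Rightarrow> 'a) \<Rightarrow> ('n \<Rightarrow> 'a) \<times> ('n \<Rightarrow> 'a) \<Rightarrow> 'a" where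
  "natB u v = pair (fst u) (snd v) + pair (fst v) (snd u)"

end

theory Submission
  imports Defs
begin

text \<open>For (a) only the linearity of \<open>x \<circ> -\<close> matters: by the defining property of
  \<open>-L\<^sup>*\<close>, in the cyclic cocycle sum the terms involving the dual component of any one
  argument cancel against the commutator term pairing with it. For (b) define \<open>x \<circ> y\<close> by
  \<open>\<langle>x \<circ> y, a\<rangle> = \<langle>y, \<rho>(x) a\<rangle>\<close>; then \<open>\<rho> = -L\<^sup>*\<close> is double duality. The cocycle condition on
  \<open>(x, 0), (y, 0), (0, a)\<close> says that the commutator of \<open>\<circ>\<close> is the given bracket. Identity (i)
  is then the representation property of \<open>\<rho>\<close> read through the pairing, and identity (ii),
  paired with \<open>a\<close>, is \<open>-1/2\<close> times the Jacobi identity paired with \<open>a\<close>; this is where the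
  characteristic enters.\<close>

definition unit_vec :: "'n \<Rightarrow> 'n \<Rightarrow> 'a::field" where
  "unit_vec j = (\<lambda>k. if k = j then 1 else 0)"

lemma pair_commute: "pair x a = pair a x"
  unfolding pair_def by (simp add: mult.commute)

lemma pair_unit_vec_right [simp]: "pair x (unit_vec j) = x j"
  unfolding pair_def unit_vec_def by (simp add: if_distrib cong: if_cong)

lemma pair_unit_vec_left [simp]: "pair (unit_vec j) a = a j"
  by (simp add: pair_commute[of "unit_vec j"])

lemma pair_vadd_left [simp]: "pair (vadd x y) a = pair x a + pair y a"
  unfolding pair_def vadd_def by (simp add: algebra_simps sum.distrib)

lemma pair_vadd_right [simp]: "pair a (vadd x y) = pair a x + pair a y"
  unfolding pair_def vadd_def by (simp add: algebra_simps sum.distrib)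

lemma pair_vsub_left [simp]: "pair (vsub x y) a = pair x a - pair y a"
  unfolding pair_def vsub_def by (simp add: algebra_simps sum_subtractf)

lemma pair_vsub_right [simp]: "pair a (vsub x y) = pair a x - pair a y"
  unfolding pair_def vsub_def by (simp add: algebra_simps sum_subtractf)

lemma pair_vscale_left [simp]: "pair (vscale c x) a = c * pair x a"
  unfolding pair_def vscale_def by (simp add: algebra_simps sum_distrib_left)

lemma pair_vscale_right [simp]: "pair a (vscale c x) = c * pair a x"
  unfolding pair_def vscale_def by (simp add: algebra_simps sum_distrib_left)

lemma pair_vzero_left [simp]: "pair vzero a = 0"
  unfolding pair_def vzero_def by simp

lemma pair_vzero_right [simp]: "pair a vzero = 0"
  unfolding pair_def vzero_def by simp

lemma pair_ext:
  fixes u v :: "'n::finite \<Rightarrow> 'a::field"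
  assumes "\<And>a. pair u a = pair v a"
  shows "u = v"
proof
  fix j
  show "u j = v j" using assms[of "unit_vec j"] by simp
qed

lemma linear_map_vzero:
  assumes "linear_map f"
  shows "f vzero = vzero"
proof -
  have "f (vscale 0 vzero) = vscale 0 (f vzero)"
    using assms unfolding linear_map_def by blast
  then show ?thesis unfolding vscale_def vzero_def by simp
qed

lemma linear_map_sum:
  assumes "linear_map f" and "finite S"
  shows "f (\<lambda>k. \<Sum>i\<in>S. c i * v i k) = (\<lambda>j. \<Sum>i\<in>S. c i * f (v i) j)"
  using assms(2)
proof (induction S rule: finite_induct)
  case empty
  then show ?case using linear_map_vzero[OF assms(1)] by (simp add: vzero_def)
next
  case (insert i S)
  have "(\<lambda>k. \<Sum>i\<in>insert i S. c i * v i k) = vadd (vscale (c i) (v i)) (\<lambda>k. \<Sum>i\<in>S. c i * v i k)"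
    using insert by (simp add: vadd_def vscale_def)
  then have "f (\<lambda>k. \<Sum>i\<in>insert i S. c i * v i k)
      = vadd (vscale (c i) (f (v i))) (f (\<lambda>k. \<Sum>i\<in>S. c i * v i k))"
    using assms(1) unfolding linear_map_def by simp
  then show ?case using insert by (simp add: vadd_def vscale_def)
qed

lemma linear_map_unit_vec_expansion:
  fixes f :: "('n::finite \<Rightarrow> 'a::field) \<Rightarrow> ('m \<Rightarrow> 'a)"
  assumes "linear_map f"
  shows "f x = (\<lambda>j. \<Sum>i\<in>UNIV. x i * f (unit_vec i) j)"
proof -
  have "x = (\<lambda>k. \<Sum>i\<in>UNIV. x i * unit_vec i k)"
    unfolding unit_vec_def by (simp add: if_distrib cong: if_cong)
  then have "f x = f (\<lambda>k. \<Sum>i\<in>UNIV. x i * unit_vec i k)" by simp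
  also have "\<dots> = (\<lambda>j. \<Sum>i\<in>UNIV. x i * f (unit_vec i) j)"
    by (rule linear_map_sum[OF assms]) simp
  finally show ?thesis .
qed

definition dual_map :: "(('n::finite \<Rightarrow> 'a::field) \<Rightarrow> ('m::finite \<Rightarrow> 'a)) \<Rightarrow> ('m \<Rightarrow> 'a) \<Rightarrow> ('n \<Rightarrow> 'a)" where
  "dual_map f a = (\<lambda>j. pair (f (unit_vec j)) a)"

lemma pair_dual_map:
  assumes "linear_map f"
  shows "pair x (dual_map f a) = pair (f x) a"
proof -
  have "pair x (dual_map f a) = (\<Sum>i\<in>UNIV. x i * (\<Sum>k\<in>UNIV. f (unit_vec i) k * a k))"
    unfolding dual_map_def pair_def by simp
  also have "\<dots> = (\<Sum>k\<in>UNIV. (\<Sum>i\<in>UNIV. x i * f (unit_vec i) k) * a k)"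
    by (simp add: sum_distrib_left sum_distrib_right mult.assoc) (rule sum.swap)
  also have "\<dots> = pair (f x) a"
    unfolding pair_def by (subst linear_map_unit_vec_expansion[OF assms, of x]) simp
  finally show ?thesis .
qed

lemma pair_dual_map_left:
  assumes "linear_map f"
  shows "pair (dual_map f y) a = pair y (f a)"
  by (simp add: pair_commute[of "dual_map f y"] pair_commute[of y] pair_dual_map[OF assms])

lemma linear_map_dual_map: "linear_map (dual_map f)"
  unfolding linear_map_def dual_map_def by (simp; simp add: vadd_def vscale_def)

lemma dual_map_dual_map:
  assumes "linear_map f"
  shows "dual_map (dual_map f) = f"
proof
  fix x
  show "dual_map (dual_map f) x = f x"
    unfolding dual_map_def[of "dual_map f"]
    by (simp add: pair_commute[of "dual_map f _"] pair_dual_map[OF assms])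
qed

lemma neg_dual_L_eq_dual_map: "neg_dual_L m x = dual_map (m x)"
  unfolding neg_dual_L_def dual_map_def unit_vec_def by (rule refl)

lemma neg_dual_L_dual_map:
  assumes "\<And>x. linear_map (\<rho> x)"
  shows "neg_dual_L (\<lambda>x. dual_map (\<rho> x)) = \<rho>"
  by (intro ext) (simp add: neg_dual_L_eq_dual_map dual_map_dual_map[OF assms])

lemma comm_2cocycle_natB_iff:
  "comm_2cocycle br natB \<longleftrightarrow>
     (\<forall>u v w. natB (br u v) w + natB (br v w) u + natB (br w u) v = 0)"
  unfolding comm_2cocycle_def natB_def padd_def pscale_def by (simp add: algebra_simps)

lemma comm_2cocycle_natB_neg_dual_L:
  assumes "\<And>x. linear_map (m x)"
  shows "comm_2cocycle (sd_bracket (commutator m) (neg_dual_L m)) natB"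
  unfolding comm_2cocycle_natB_iff natB_def sd_bracket_def commutator_def
  by (simp add: neg_dual_L_eq_dual_map pair_dual_map[OF assms] algebra_simps)

lemma nondegenerate_natB: "nondegenerate (natB :: ('n::finite \<Rightarrow> 'a::field) \<times> ('n \<Rightarrow> 'a) \<Rightarrow> _)"
  unfolding nondegenerate_def
proof (intro allI impI)
  fix u :: "('n \<Rightarrow> 'a) \<times> ('n \<Rightarrow> 'a)"
  assume orth: "\<forall>v. natB u v = 0"
  have "fst u = vzero"
  proof
    fix j
    show "fst u j = vzero j"
      using orth[rule_format, of "(vzero, unit_vec j)"] by (simp add: natB_def; simp add: vzero_def)
  qed
  moreover have "snd u = vzero"
  proof
    fix j
    show "snd u j = vzero j"
      using orth[rule_format, of "(unit_vec j, vzero)"] by (simp add: natB_def; simp add: vzero_def)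
  qed
  ultimately show "u = (vzero, vzero)" by (simp add: prod_eq_iff)
qed

lemma pair_bracket_of_comm_2cocycle_natB:
  assumes "representation br \<rho>" and "comm_2cocycle (sd_bracket br \<rho>) natB"
  shows "pair (br x y) a = pair y (\<rho> x a) - pair x (\<rho> y a)"
proof -
  have "\<rho> vzero vzero = vzero"
    using assms(1) linear_map_vzero unfolding representation_def by blast
  moreover have "natB (sd_bracket br \<rho> (x, vzero) (y, vzero)) (vzero, a)
      + natB (sd_bracket br \<rho> (y, vzero) (vzero, a)) (x, vzero)
      + natB (sd_bracket br \<rho> (vzero, a) (x, vzero)) (y, vzero) = 0"
    using assms(2) unfolding comm_2cocycle_natB_iff by blast
  ultimately show ?thesis by (simp add: natB_def sd_bracket_def algebra_simps)
qed

lemma commutator_dual_map_eq_bracket: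
  assumes "representation br \<rho>" and "comm_2cocycle (sd_bracket br \<rho>) natB"
  shows "commutator (\<lambda>x. dual_map (\<rho> x)) = br"
proof -
  have "\<And>x. linear_map (\<rho> x)" using assms(1) unfolding representation_def by blast
  then have "pair (commutator (\<lambda>x. dual_map (\<rho> x)) x y) a = pair (br x y) a" for x y a
    by (simp add: commutator_def pair_dual_map_left pair_bracket_of_comm_2cocycle_natB[OF assms])
  then show ?thesis by (blast intro: pair_ext)
qed

lemma bilinear_op_dual_map:
  assumes "\<And>x. linear_map (\<rho> x)" and "\<And>a. linear_map (\<lambda>x. \<rho> x a)"
  shows "bilinear_op (\<lambda>x. dual_map (\<rho> x))"
  unfolding bilinear_op_def
proof (intro conjI allI)
  show "linear_map (dual_map (\<rho> x))" for x by (rule linear_map_dual_map)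
  show "linear_map (\<lambda>x. dual_map (\<rho> x) y)" for y
    unfolding linear_map_def
    by (intro conjI allI; rule pair_ext)
      (simp_all add: pair_dual_map_left assms(1) assms(2)[unfolded linear_map_def])
qed

lemma anti_pre_Lie_dual_map:
  fixes br \<rho> :: "('n::finite \<Rightarrow> 'a::field_char_0) \<Rightarrow> ('n \<Rightarrow> 'a) \<Rightarrow> ('n \<Rightarrow> 'a)"
  assumes lie: "lie_algebra br" and rep: "representation br \<rho>"
    and comm: "commutator (\<lambda>x. dual_map (\<rho> x)) = br"
  shows "anti_pre_Lie (\<lambda>x. dual_map (\<rho> x))" (is "anti_pre_Lie ?m")
proof -
  have lin: "\<And>x. linear_map (\<rho> x)" and lin': "\<And>a. linear_map (\<lambda>x. \<rho> x a)"
    and hom: "\<And>x y a. \<rho> (br x y) a = vsub (\<rho> x (\<rho> y a)) (\<rho> y (\<rho> x a))"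
    using rep unfolding representation_def by blast+
  have pair_m [simp]: "pair (?m x y) a = pair y (\<rho> x a)" for x y a
    by (rule pair_dual_map_left[OF lin])
  have pair_br: "pair (br x y) a = pair y (\<rho> x a) - pair x (\<rho> y a)" for x y a
    unfolding comm[symmetric] commutator_def by simp
  have left_comm: "vsub (?m x (?m y z)) (?m y (?m x z)) = ?m (commutator ?m y x) z" for x y z
    by (rule pair_ext) (simp add: comm hom)
  have cyclic: "vadd (vadd (?m (commutator ?m x y) z) (?m (commutator ?m y z) x))
      (?m (commutator ?m z x) y) = vzero" for x y z
  proof (rule pair_ext)
    fix a
    let ?S = "pair (vadd (vadd (?m (br x y) z) (?m (br y z) x)) (?m (br z x) y)) a"
    have "pair (vadd (vadd (br x (br y z)) (br y (br z x))) (br z (br x y))) a = 0"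
      using lie unfolding lie_algebra_def by simp
    then have "?S + ?S = 0" by (simp add: pair_br hom algebra_simps)
    then have "2 * ?S = 0" by (simp only: mult_2)
    then have "?S = 0" by (metis mult_eq_0_iff zero_neq_numeral)
    then show "pair (vadd (vadd (?m (commutator ?m x y) z) (?m (commutator ?m y z) x))
        (?m (commutator ?m z x) y)) a = pair vzero a"
      by (simp only: comm pair_vzero_left)
  qed
  show ?thesis
    unfolding anti_pre_Lie_def using bilinear_op_dual_map[OF lin lin'] left_comm cyclic by blast
qed

theorem proposition2p26:
  fixes dummy :: "'n::finite \<Rightarrow> 'a::field_char_0"
  shows "(\<forall>m :: ('n \<Rightarrow> 'a) \<Rightarrow> ('n \<Rightarrow> 'a) \<Rightarrow> ('n \<Rightarrow> 'a).
            anti_pre_Lie m \<longrightarrow>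
              comm_2cocycle (sd_bracket (commutator m) (neg_dual_L m)) natB \<and> nondegenerate natB)
       \<and> (\<forall>(br :: ('n \<Rightarrow> 'a) \<Rightarrow> ('n \<Rightarrow> 'a) \<Rightarrow> ('n \<Rightarrow> 'a)) (\<rho> :: ('n \<Rightarrow> 'a) \<Rightarrow> ('n \<Rightarrow> 'a) \<Rightarrow> ('n \<Rightarrow> 'a)).
            lie_algebra br \<and> representation br \<rho> \<and> comm_2cocycle (sd_bracket br \<rho>) natB \<longrightarrow>
              (\<exists>m. anti_pre_Lie m \<and> (\<forall>x y. commutator m x y = br x y) \<and> \<rho> = neg_dual_L m))"
proof (intro conjI allI impI)
  fix m :: "('n \<Rightarrow> 'a) \<Rightarrow> ('n \<Rightarrow> 'a) \<Rightarrow> ('n \<Rightarrow> 'a)"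
  assume "anti_pre_Lie m"
  then have "\<And>x. linear_map (m x)" unfolding anti_pre_Lie_def bilinear_op_def by blast
  then show "comm_2cocycle (sd_bracket (commutator m) (neg_dual_L m)) natB"
    by (rule comm_2cocycle_natB_neg_dual_L)
next
  \<comment> \<open>the statement leaves the type of this \<open>natB\<close> unconstrained\<close>
  show "nondegenerate natB" by (rule nondegenerate_natB)
next
  fix br \<rho> :: "('n \<Rightarrow> 'a) \<Rightarrow> ('n \<Rightarrow> 'a) \<Rightarrow> ('n \<Rightarrow> 'a)"
  assume "lie_algebra br \<and> representation br \<rho> \<and> comm_2cocycle (sd_bracket br \<rho>) natB"
  then have lie: "lie_algebra br" and rep: "representation br \<rho>"
    and cocycle: "comm_2cocycle (sd_bracket br \<rho>) natB" by blast+
  have comm: "commutator (\<lambda>x. dual_map (\<rho> x)) = br"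
    by (rule commutator_dual_map_eq_bracket[OF rep cocycle])
  have "\<And>x. linear_map (\<rho> x)" using rep unfolding representation_def by blast
  then have "\<rho> = neg_dual_L (\<lambda>x. dual_map (\<rho> x))" by (simp add: neg_dual_L_dual_map)
  with anti_pre_Lie_dual_map[OF lie rep comm] comm
  show "\<exists>m. anti_pre_Lie m \<and> (\<forall>x y. commutator m x y = br x y) \<and> \<rho> = neg_dual_L m"
    by auto
qed

end
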